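(* Let $1/n\ll \beta \ll\xi, \mu$. Let $K_{2n+1}$ be 2-factorized. Suppose that $V_0\subseteq V(K_{2n+1})$ and $D_0\subseteq C(K_{2n+1})$ are $\mu$-random subsets which are independent of each other. Then, with high probability, the following holds. Let $C,\bar{C}\subseteq C(K_{2n+1})$ and $X,\bar{V},Z\subseteq V(K_{2n+1})$ satisfy $|\bar{C}|,|\bar{V}|\leq \beta n$ and $|C|\leq 100$, and suppose that $X,Z$ are disjoint and $(X,Z)$ is $(\xi n)$-replete. Then there are sets $X'\subseteq X\setminus \bar{V}$, $C'\subseteq D_0\setminus \bar{C}$ and $V'\subseteq (V_0\cup Z)\setminus \bar{V}$ with $|X'|=|C|$, $|C'|=|C|-1$ and $|V'|\leq 3|C|$ such that, for every $c\in C$, there is a perfect $(C'\cup \{c\})$-rainbow matching from $X'$ to $V'$.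
   Context: A 2-factorization of $K_{2n+1}$ is an edge-colouring in which every vertex is incident to exactly 2 edges of each colour; $C(K_{2n+1})$ is its colour set. A $q$-random subset contains each element independently with probability $q$. For disjoint $W,Y$, $(W,Y)$ is $\ell$-replete if for every colour at least $\ell$ edges of that colour join $W$ to $Y$. A perfect $D$-rainbow matching from $X'$ to $V'$ is a matching covering every vertex of $X'$, each edge joining $X'$ to $V'$, with distinct colours all in $D$. "With high probability": probability $1-o(1)$ as $n\to\infty$. $a\ll b,c$ means the statement holds whenever $a\le \min(b,c)^K/K$ for a suitable fixed absolute constant $K$; $1/n\ll\cdots$ entails $n$ large. *)

theory Defs
  imports "HOL-Probability.Probability"
begin

definition verts :: "nat \<Rightarrow> nat set" where
  "verts n = {..<2*n+1}"

definition Kedges :: "nat \<Rightarrow> nat set set" where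
  "Kedges n = {e. \<exists>u v. u \<noteq> v \<and> u \<in> verts n \<and> v \<in> verts n \<and> e = {u, v}}"

definition colours :: "nat \<Rightarrow> (nat set \<Rightarrow> 'c) \<Rightarrow> 'c set" where
  "colours n col = col ` Kedges n"

definition two_factorization :: "nat \<Rightarrow> (nat set \<Rightarrow> 'c) \<Rightarrow> bool" where
  "two_factorization n col \<longleftrightarrow>
     (\<forall>v\<in>verts n. \<forall>c\<in>colours n col. card {e \<in> Kedges n. v \<in> e \<and> col e = c} = 2)"

definition random_subset :: "real \<Rightarrow> 'a set \<Rightarrow> 'a set pmf" where
  "random_subset q A = map_pmf (\<lambda>f. {x\<in>A. f x}) (Pi_pmf A False (\<lambda>_. bernoulli_pmf q))"

definition replete :: "nat \<Rightarrow> (nat set \<Rightarrow> 'c) \<Rightarrow> real \<Rightarrow> nat set \<Rightarrow> nat set \<Rightarrow> bool" where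
  "replete n col l W Y \<longleftrightarrow> W \<inter> Y = {} \<and>
     (\<forall>c\<in>colours n col.
        real (card {e \<in> Kedges n. col e = c \<and> (\<exists>w\<in>W. \<exists>y\<in>Y. e = {w, y})}) \<ge> l)"

definition perfect_rainbow_matching ::
  "nat \<Rightarrow> (nat set \<Rightarrow> 'c) \<Rightarrow> 'c set \<Rightarrow> nat set \<Rightarrow> nat set \<Rightarrow> nat set set \<Rightarrow> bool" where
  "perfect_rainbow_matching n col D X' V' M \<longleftrightarrow>
     M \<subseteq> Kedges n \<and>
     (\<forall>e\<in>M. \<forall>e'\<in>M. e \<noteq> e' \<longrightarrow> e \<inter> e' = {}) \<and>
     (\<forall>x\<in>X'. \<exists>e\<in>M. x \<in> e) \<and>
     (\<forall>e\<in>M. \<exists>x\<in>X'. \<exists>v\<in>V' - X'. e = {x, v}) \<and>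
     inj_on col M \<and> col ` M \<subseteq> D"

definition lemma4p1_property ::
  "nat \<Rightarrow> (nat set \<Rightarrow> 'c) \<Rightarrow> real \<Rightarrow> real \<Rightarrow> nat set \<Rightarrow> 'c set \<Rightarrow> bool" where
  "lemma4p1_property n col \<beta> \<xi> V0 D0 \<longleftrightarrow>
     (\<forall>C Cbar X Vbar Z.
        C \<subseteq> colours n col \<longrightarrow> Cbar \<subseteq> colours n col \<longrightarrow>
        X \<subseteq> verts n \<longrightarrow> Vbar \<subseteq> verts n \<longrightarrow> Z \<subseteq> verts n \<longrightarrow>
        real (card Cbar) \<le> \<beta> * n \<longrightarrow> real (card Vbar) \<le> \<beta> * n \<longrightarrow> card C \<le> 100 \<longrightarrow>
        X \<inter> Z = {} \<longrightarrow> replete n col (\<xi> * n) X Z \<longrightarrow>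
        (\<exists>X' C' V'. X' \<subseteq> X - Vbar \<and> C' \<subseteq> D0 - Cbar \<and> V' \<subseteq> (V0 \<union> Z) - Vbar \<and>
           card X' = card C \<and> card C' = card C - 1 \<and> card V' \<le> 3 * card C \<and>
           (\<forall>c\<in>C. \<exists>M. perfect_rainbow_matching n col (C' \<union> {c}) X' V' M)))"

end

(* Call a colour d linking for vertices x, x' if d is in D0 and x, x' have distinct
   d-neighbours in V0. In a 2-factorization there are at least n/3 colours d with a
   d-neighbour a_d of x and a d-neighbour b_d of x' such that the triples {d, a_d, b_d} are
   pairwise disjoint. Each such colour is linking independently with probability mu^3, so by
   Hoeffding's inequality and a union bound over all pairs, with high probability every pair
   has at least mu^3 n / 6 linking colours.

   Then, for C = {c_0, ..., c_K}, choose greedily distinct x_i in X with c_i-neighbours y_i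
   in Z (repleteness), and distinct linking colours d_i of the pairs (x_i, x_(i+1)) with
   fresh d_i-neighbours a_i of x_i and b_i of x_(i+1). With C' = {d_i}, the colour c_j is
   absorbed by matching x_i to a_i for i < j, x_j to y_j, and x_i to b_(i-1) for i > j. *)

theory Submission
  imports Defs "HOL-Real_Asymp.Real_Asymp"
begin

lemma exists_independent_subset:
  fixes R :: "'a \<Rightarrow> 'a \<Rightarrow> bool"
  assumes "finite S" "\<And>d. d \<in> S \<Longrightarrow> \<not> R d d"
    and "\<And>d. d \<in> S \<Longrightarrow> card {d'\<in>S. R d d' \<or> R d' d} \<le> \<Delta>"
  shows "\<exists>T\<subseteq>S. card S \<le> Suc \<Delta> * card T \<and> (\<forall>d\<in>T. \<forall>d'\<in>T. \<not> R d d')"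
  using assms
proof (induction "card S" arbitrary: S rule: less_induct)
  case less
  show ?case
  proof (cases "S = {}")
    case False
    then obtain v where v: "v \<in> S"
      by auto
    define N where "N = insert v {d'\<in>S. R v d' \<or> R d' v}"
    define S' where "S' = S - N"
    have "S = S' \<union> N"
      using v by (auto simp: S'_def N_def)
    then have "card S \<le> card S' + card N"
      using card_Un_le[of S' N] by simp
    also have "card N \<le> Suc (card {d'\<in>S. R v d' \<or> R d' v})"
      using less.prems(1) by (simp add: N_def card_insert_if)
    also have "\<dots> \<le> Suc \<Delta>"
      using less.prems(3)[OF v] by simp
    finally have S: "card S \<le> card S' + Suc \<Delta>"
      by simp
    have "card S' < card S"
      using v less.prems(1) by (intro psubset_card_mono) (auto simp: S'_def N_def)
    moreover have "card {d'\<in>S'. R d d' \<or> R d' d} \<le> \<Delta>" if "d \<in> S'" for d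
    proof -
      have "card {d'\<in>S'. R d d' \<or> R d' d} \<le> card {d'\<in>S. R d d' \<or> R d' d}"
        using less.prems(1) by (intro card_mono) (auto simp: S'_def)
      also have "\<dots> \<le> \<Delta>"
        using that less.prems(3) by (simp add: S'_def)
      finally show ?thesis .
    qed
    ultimately obtain T where T: "T \<subseteq> S'" "card S' \<le> Suc \<Delta> * card T" "\<forall>d\<in>T. \<forall>d'\<in>T. \<not> R d d'"
      using less.hyps[of S'] less.prems(1,2) by (auto simp: S'_def)
    moreover have "finite T" "v \<notin> T"
      using T(1) less.prems(1) by (auto simp: S'_def N_def intro: finite_subset)
    ultimately show ?thesis
      using v S less.prems(2)[OF v]
      by (intro exI[of _ "insert v T"]) (auto simp: S'_def N_def)
  qed simp
qed

lemma card_Un_images_le: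
  assumes "finite I"
  shows "card (A \<union> f ` I \<union> g ` I) \<le> card A + 2 * card I"
proof -
  have "card (A \<union> f ` I \<union> g ` I) \<le> card A + card (f ` I) + card (g ` I)"
    by (meson add_mono card_Un_le order_refl order_trans)
  then show ?thesis
    using card_image_le[OF assms, of f] card_image_le[OF assms, of g] by linarith
qed

lemma greedy_sequence:
  fixes m :: nat
  assumes "\<And>i zs. i < m \<Longrightarrow> \<forall>j<i. P j (zs j) \<Longrightarrow> \<exists>z. P i z \<and> (\<forall>j<i. Q (zs j) z)"
  shows "\<exists>zs. (\<forall>i<m. P i (zs i)) \<and> (\<forall>i<m. \<forall>j<i. Q (zs j) (zs i))"
  using assms
proof (induction m)
  case (Suc m)
  have "\<exists>z. P i z \<and> (\<forall>j<i. Q (zs j) z)" if "i < m" "\<forall>j<i. P j (zs j)" for i zs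
    using Suc.prems that by simp
  then obtain zs where zs: "\<forall>i<m. P i (zs i)" "\<forall>i<m. \<forall>j<i. Q (zs j) (zs i)"
    using Suc.IH by blast
  moreover obtain z where "P m z" "\<forall>j<m. Q (zs j) z"
    using Suc.prems[of m zs] zs(1) by blast
  ultimately show ?case
    by (intro exI[of _ "zs(m := z)"]) (auto simp: less_Suc_eq)
qed simp

lemma inj_on_lessThanI:
  fixes f :: "nat \<Rightarrow> 'a"
  assumes "\<And>i j. i < m \<Longrightarrow> j < i \<Longrightarrow> f j \<noteq> f i"
  shows "inj_on f {..<m}"
proof (rule inj_onI)
  fix i j
  assume i: "i \<in> {..<m}" and j: "j \<in> {..<m}" and eq: "f i = f j"
  show "i = j"
  proof (cases i j rule: linorder_cases)
    case less
    then show ?thesis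
      using assms[of j i] j eq by simp
  next
    case greater
    then show ?thesis
      using assms[of i j] i eq by simp
  qed
qed

lemma inj_on_disjoint_images_lessThan:
  fixes K :: nat
  assumes "\<forall>i<K. a i \<noteq> b i" and "\<forall>i<K. \<forall>j<i. d j \<noteq> d i \<and> a j \<notin> {a i, b i} \<and> b j \<notin> {a i, b i}"
  shows "inj_on d {..<K}" "inj_on a {..<K}" "inj_on b {..<K}" "a ` {..<K} \<inter> b ` {..<K} = {}"
proof -
  show "inj_on d {..<K}"
    by (rule inj_on_lessThanI) (use assms(2) in blast)
  show "inj_on a {..<K}"
    by (rule inj_on_lessThanI) (use assms(2) in blast)
  show "inj_on b {..<K}"
    by (rule inj_on_lessThanI) (use assms(2) in blast)
  have "a i \<noteq> b j" if "i < K" "j < K" for i j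
    using assms(1)[rule_format, of i] assms(2)[rule_format, of j i] assms(2)[rule_format, of i j] that
    by (cases i j rule: linorder_cases) auto
  then show "a ` {..<K} \<inter> b ` {..<K} = {}"
    by blast
qed

section \<open>Products of Bernoulli variables\<close>

lemma prob_Pi_pmf_bernoulli_all_True:
  fixes \<mu> :: real
  assumes I: "finite I" and S: "S \<subseteq> I" and \<mu>: "0 \<le> \<mu>" "\<mu> \<le> 1"
  shows "measure_pmf.prob (Pi_pmf I False (\<lambda>_. bernoulli_pmf \<mu>)) {h. \<forall>i\<in>S. h i} = \<mu> ^ card S"
proof -
  have "{h. \<forall>i\<in>S. h i} = Pi I (\<lambda>i. if i \<in> S then {True} else UNIV)"
    using S by (auto simp: Pi_def)
  then have "measure_pmf.prob (Pi_pmf I False (\<lambda>_. bernoulli_pmf \<mu>)) {h. \<forall>i\<in>S. h i}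
      = (\<Prod>i\<in>I. if i \<in> S then \<mu> else 1)"
    using I \<mu> by (simp add: measure_Pi_pmf_Pi measure_pmf_single if_distrib cong: if_cong)
  also have "\<dots> = \<mu> ^ card S"
    using I S by (simp add: prod.If_cases Int_absorb1)
  finally show ?thesis .
qed

lemma prob_Pi_pmf_bernoulli_few_full_blocks:
  fixes \<mu> :: real
  assumes I: "finite I" and T: "finite T" and \<mu>: "0 \<le> \<mu>" "\<mu> \<le> 1"
    and B: "\<And>d. d \<in> T \<Longrightarrow> B d \<subseteq> I \<and> card (B d) = m" and disj: "disjoint_family_on B T"
  shows "measure_pmf.prob (Pi_pmf I False (\<lambda>_. bernoulli_pmf \<mu>))
     {h. real (card {d\<in>T. \<forall>i\<in>B d. h i}) \<le> card T * \<mu> ^ m / 2} \<le> exp (- (card T * (\<mu> ^ m)\<^sup>2 / 2))"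
proof (cases "T = {}")
  case False
  let ?P = "Pi_pmf I False (\<lambda>_. bernoulli_pmf \<mu>)"
  let ?M = "measure_pmf ?P"
  define Y where "Y = (\<lambda>d h. indicator {h. \<forall>i\<in>B d. h i} h :: real)"
  have "prob_space.indep_vars ?M (\<lambda>d. PiM (B d) (\<lambda>_. count_space UNIV)) (\<lambda>d h. restrict h (B d)) T"
    using prob_space.indep_vars_restrict[OF measure_pmf.prob_space_axioms indep_vars_Pi_pmf[OF I], of T B]
      B disj by auto
  moreover have "(\<lambda>g. indicator {g. \<forall>i\<in>B d. g i} g :: real) \<in> borel_measurable (PiM (B d) (\<lambda>_. count_space UNIV))"
    if "d \<in> T" for d
    using finite_subset[OF conjunct1[OF B[OF that]] I]
    unfolding indicator_def by (auto intro!: measurable_If pred_intros_finite)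
  ultimately have "prob_space.indep_vars ?M (\<lambda>_. borel)
      (\<lambda>d h. (\<lambda>g. indicator {g. \<forall>i\<in>B d. g i} g :: real) (restrict h (B d))) T"
    by (rule prob_space.indep_vars_compose2[OF measure_pmf.prob_space_axioms])
  then have indep: "prob_space.indep_vars ?M (\<lambda>_. borel) Y T"
    by (rule prob_space.indep_vars_cong[OF measure_pmf.prob_space_axioms, THEN iffD1, rotated 3])
      (auto simp: Y_def indicator_def)
  interpret H: Hoeffding_ineq ?M T Y "\<lambda>_. 0" "\<lambda>_. 1" "\<Sum>d\<in>T. measure_pmf.expectation ?P (Y d)"
    using T indep by unfold_locales (auto simp: Y_def)
  have "(\<Sum>d\<in>T. measure_pmf.expectation ?P (Y d)) = card T * \<mu> ^ m"
    using prob_Pi_pmf_bernoulli_all_True[OF I _ \<mu>] B by (simp add: Y_def)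
  moreover have "(\<Sum>d\<in>T. Y d h) = real (card {d\<in>T. \<forall>i\<in>B d. h i})" for h
    using T by (simp add: Y_def indicator_def Int_def)
  moreover have "card T > 0"
    using T False by (simp add: card_gt_0_iff)
  ultimately show ?thesis
    using H.Hoeffding_ineq_le[of "card T * \<mu> ^ m / 2"] \<mu> by (simp add: power2_eq_square)
qed simp

lemma random_subset_reindex:
  assumes "finite A" "inj f"
  shows "random_subset \<mu> A = map_pmf (\<lambda>g. {a\<in>A. g (f a)}) (Pi_pmf (f ` A) False (\<lambda>_. bernoulli_pmf \<mu>))"
  unfolding random_subset_def
  using assms by (subst Pi_pmf_bij_betw[of A f "f ` A"])
    (auto simp: bij_betw_def inj_on_subset[OF assms(2)] inj_image_mem_iff pmf.map_comp o_def)

lemma pair_random_subset_eq_Pi_pmf_Plus: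
  assumes A: "finite A" and B: "finite B"
  shows "pair_pmf (random_subset \<mu> A) (random_subset \<mu> B) =
    map_pmf (\<lambda>h. ({a\<in>A. h (Inl a)}, {b\<in>B. h (Inr b)})) (Pi_pmf (A <+> B) False (\<lambda>_. bernoulli_pmf \<mu>))"
proof -
  let ?P = "\<lambda>S. Pi_pmf S False (\<lambda>_. bernoulli_pmf \<mu>) :: ('a + 'b \<Rightarrow> bool) pmf"
  have "Pi_pmf (A <+> B) False (\<lambda>_. bernoulli_pmf \<mu>) =
      map_pmf (\<lambda>(f, g) x. if x \<in> Inl ` A then f x else g x) (pair_pmf (?P (Inl ` A)) (?P (Inr ` B)))"
    unfolding Plus_def using A B by (intro Pi_pmf_union) auto
  moreover have "pair_pmf (random_subset \<mu> A) (random_subset \<mu> B) =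
      map_pmf (\<lambda>(f, g). ({a\<in>A. f (Inl a)}, {b\<in>B. g (Inr b)})) (pair_pmf (?P (Inl ` A)) (?P (Inr ` B)))"
    using A B by (simp add: map_pair
        random_subset_reindex[of A "Inl :: 'a \<Rightarrow> 'a + 'b"] random_subset_reindex[of B "Inr :: 'b \<Rightarrow> 'a + 'b"])
  ultimately show ?thesis
    by (auto simp: pmf.map_comp o_def case_prod_unfold image_iff intro!: map_pmf_cong)
qed

section \<open>Colour neighbourhoods in a 2-factorization\<close>

lemma finite_verts [simp]: "finite (verts n)"
  by (simp add: verts_def)

lemma Kedges_subset_Pow_verts: "Kedges n \<subseteq> Pow (verts n)"
  by (auto simp: Kedges_def)

lemma finite_Kedges [simp]: "finite (Kedges n)"
  using Kedges_subset_Pow_verts by (rule finite_subset) simp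

lemma finite_colours [simp]: "finite (colours n col)"
  by (simp add: colours_def)

lemma doubleton_in_Kedges_iff: "{v, w} \<in> Kedges n \<longleftrightarrow> v \<noteq> w \<and> v \<in> verts n \<and> w \<in> verts n"
  by (auto simp: Kedges_def doubleton_eq_iff)

definition col_nbhd :: "nat \<Rightarrow> (nat set \<Rightarrow> 'c) \<Rightarrow> nat \<Rightarrow> 'c \<Rightarrow> nat set" where
  "col_nbhd n col v d = {w. {v, w} \<in> Kedges n \<and> col {v, w} = d}"

lemma col_nbhd_subset_verts: "col_nbhd n col v d \<subseteq> verts n"
  by (auto simp: col_nbhd_def doubleton_in_Kedges_iff)

lemma finite_col_nbhd [simp]: "finite (col_nbhd n col v d)"
  using col_nbhd_subset_verts by (rule finite_subset) simp

lemma card_col_nbhd: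
  assumes "two_factorization n col" "v \<in> verts n" "d \<in> colours n col"
  shows "card (col_nbhd n col v d) = 2"
proof -
  have "{e \<in> Kedges n. v \<in> e \<and> col e = d} = (\<lambda>w. {v, w}) ` col_nbhd n col v d"
  proof (intro equalityI subsetI)
    fix e
    assume e: "e \<in> {e \<in> Kedges n. v \<in> e \<and> col e = d}"
    then obtain u w where "e = {u, w}" "v = u \<or> v = w"
      by (auto simp: Kedges_def)
    then obtain w' where "e = {v, w'}"
      by (auto simp: doubleton_eq_iff)
    with e show "e \<in> (\<lambda>w. {v, w}) ` col_nbhd n col v d"
      by (auto simp: col_nbhd_def)
  qed (auto simp: col_nbhd_def)
  moreover have "inj_on (\<lambda>w. {v, w}) (col_nbhd n col v d)"
    by (auto simp: inj_on_def col_nbhd_def doubleton_in_Kedges_iff doubleton_eq_iff)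
  ultimately have "card (col_nbhd n col v d) = card {e \<in> Kedges n. v \<in> e \<and> col e = d}"
    by (simp add: card_image)
  with assms show ?thesis
    by (simp add: two_factorization_def)
qed

lemma card_colours_ge:
  assumes tf: "two_factorization n col"
  shows "n \<le> card (colours n col)"
proof -
  have v0: "0 \<in> verts n"
    by (simp add: verts_def)
  have "w \<in> col_nbhd n col 0 (col {0, w})" if "w \<in> verts n - {0}" for w
    using that v0 by (auto simp: col_nbhd_def doubleton_in_Kedges_iff)
  moreover have "col {0, w} \<in> colours n col" if "w \<in> verts n - {0}" for w
    using that v0 by (auto simp: colours_def doubleton_in_Kedges_iff)
  ultimately have "verts n - {0} \<subseteq> (\<Union>d\<in>colours n col. col_nbhd n col 0 d)"
    by blast
  then have "card (verts n - {0}) \<le> card (\<Union>d\<in>colours n col. col_nbhd n col 0 d)"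
    by (intro card_mono) auto
  also have "\<dots> \<le> (\<Sum>d\<in>colours n col. card (col_nbhd n col 0 d))"
    by (rule card_UN_le) simp
  also have "\<dots> = (\<Sum>d\<in>colours n col. 2)"
    by (intro sum.cong refl card_col_nbhd[OF tf v0])
  finally show ?thesis
    using v0 by (simp add: verts_def)
qed

lemma card_edges_at_vertex_le:
  assumes "two_factorization n col" "c \<in> colours n col"
  shows "card {e\<in>Kedges n. w \<in> e \<and> col e = c} \<le> 2"
proof (cases "w \<in> verts n")
  case False
  then have empty: "{e\<in>Kedges n. w \<in> e \<and> col e = c} = {}"
    using Kedges_subset_Pow_verts by blast
  show ?thesis
    unfolding empty by simp
qed (use assms in \<open>simp add: two_factorization_def\<close>)

lemma ex_in_col_nbhd_Diff_singleton:
  assumes "two_factorization n col" "v \<in> verts n" "d \<in> colours n col"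
  shows "\<exists>w. w \<in> col_nbhd n col v d - {u}"
proof -
  obtain w w' where "col_nbhd n col v d = {w, w'}" "w \<noteq> w'"
    using card_col_nbhd[OF assms] by (auto simp: card_2_iff)
  then show ?thesis
    by blast
qed

lemma inj_on_col_nbhd_choice:
  assumes "\<And>d. d \<in> S \<Longrightarrow> f d \<in> col_nbhd n col v d"
  shows "inj_on f S"
proof (rule inj_onI)
  fix d d'
  assume "d \<in> S" "d' \<in> S" "f d = f d'"
  then show "d = d'"
    using assms[of d] assms[of d'] by (simp add: col_nbhd_def)
qed

lemma exists_disjoint_col_nbhd_choice:
  assumes tf: "two_factorization n col" and x: "x \<in> verts n" and x': "x' \<in> verts n"
  shows "\<exists>T a b. T \<subseteq> colours n col \<and> card (colours n col) \<le> 3 * card T \<and>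
     (\<forall>d\<in>T. a d \<in> col_nbhd n col x d \<and> b d \<in> col_nbhd n col x' d) \<and>
     inj_on a T \<and> inj_on b T \<and> a ` T \<inter> b ` T = {}"
proof -
  let ?S = "colours n col"
  have "\<forall>d\<in>?S. \<exists>w. w \<in> col_nbhd n col x d"
    using ex_in_col_nbhd_Diff_singleton[OF tf x, where u = x] by blast
  then obtain a where a: "\<forall>d\<in>?S. a d \<in> col_nbhd n col x d"
    by (rule bchoice[elim_format]) blast
  have "\<forall>d\<in>?S. \<exists>w. w \<in> col_nbhd n col x' d - {a d}"
    using ex_in_col_nbhd_Diff_singleton[OF tf x'] by blast
  then obtain b where b: "\<forall>d\<in>?S. b d \<in> col_nbhd n col x' d - {a d}"
    by (rule bchoice[elim_format]) blast
  have inj: "inj_on a ?S" "inj_on b ?S"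
    using a b by (auto intro: inj_on_col_nbhd_choice)
  \<comment> \<open>Colours d, d' conflict if a d = b d'; conflict-free colours have disjoint triples.\<close>
  define R where "R = (\<lambda>d d'. a d = b d')"
  have irrefl: "\<not> R d d" if "d \<in> ?S" for d
    using b that by (auto simp: R_def)
  have deg: "card {d'\<in>?S. R d d' \<or> R d' d} \<le> 2" for d
  proof -
    have "{d'\<in>?S. R d d' \<or> R d' d} = {d'\<in>?S. b d' = a d} \<union> {d'\<in>?S. a d' = b d}"
      by (auto simp: R_def)
    moreover have "card {d'\<in>?S. b d' = a d} \<le> 1" "card {d'\<in>?S. a d' = b d} \<le> 1"
      using inj by (auto simp: card_le_Suc0_iff_eq) (metis inj_onD)+
    ultimately show ?thesis
      using card_Un_le[of "{d'\<in>?S. b d' = a d}" "{d'\<in>?S. a d' = b d}"] by simp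
  qed
  obtain T where T: "T \<subseteq> ?S" "card ?S \<le> 3 * card T" "\<forall>d\<in>T. \<forall>d'\<in>T. \<not> R d d'"
    using exists_independent_subset[of ?S R 2, OF finite_colours irrefl deg] by auto
  then have "a ` T \<inter> b ` T = {}"
    by (auto simp: R_def)
  with T a b inj show ?thesis
    by (intro exI[of _ T] exI[of _ a] exI[of _ b]) (auto intro: inj_on_subset)
qed

section \<open>Linking colours\<close>

definition linking_colours :: "nat \<Rightarrow> (nat set \<Rightarrow> 'c) \<Rightarrow> nat set \<Rightarrow> 'c set \<Rightarrow> nat \<Rightarrow> nat \<Rightarrow> 'c set" where
  "linking_colours n col V0 D0 x x' =
     {d\<in>D0. \<exists>a\<in>V0. \<exists>b\<in>V0. a \<noteq> b \<and> a \<in> col_nbhd n col x d \<and> b \<in> col_nbhd n col x' d}"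

lemma full_triples_subset_linking_colours:
  assumes "T \<subseteq> colours n col" "\<forall>d\<in>T. a d \<in> col_nbhd n col x d \<and> b d \<in> col_nbhd n col x' d"
    and "a ` T \<inter> b ` T = {}"
  shows "{d\<in>T. h (Inr d) \<and> h (Inl (a d)) \<and> h (Inl (b d))}
    \<subseteq> linking_colours n col {v\<in>verts n. h (Inl v)} {d\<in>colours n col. h (Inr d)} x x'"
proof
  fix d
  assume d: "d \<in> {d\<in>T. h (Inr d) \<and> h (Inl (a d)) \<and> h (Inl (b d))}"
  then have "a d \<in> verts n" "b d \<in> verts n" "a d \<noteq> b d" "d \<in> colours n col"
    using assms by (auto dest: col_nbhd_subset_verts[THEN subsetD])
  with d assms(2) show "d \<in> linking_colours n col {v\<in>verts n. h (Inl v)} {d\<in>colours n col. h (Inr d)} x x'"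
    unfolding linking_colours_def by blast
qed

lemma prob_few_linking_colours:
  fixes col :: "nat set \<Rightarrow> 'c" and \<mu> :: real
  assumes tf: "two_factorization n col" and x: "x \<in> verts n" and x': "x' \<in> verts n"
    and \<mu>: "0 \<le> \<mu>" "\<mu> \<le> 1"
  shows "measure_pmf.prob (pair_pmf (random_subset \<mu> (verts n)) (random_subset \<mu> (colours n col)))
     {(V0, D0). real (card (linking_colours n col V0 D0 x x')) < \<mu>^3 * n / 6} \<le> exp (- (\<mu>^6 * n / 6))"
proof -
  obtain T a b where T: "T \<subseteq> colours n col" "card (colours n col) \<le> 3 * card T"
    and ab: "\<forall>d\<in>T. a d \<in> col_nbhd n col x d \<and> b d \<in> col_nbhd n col x' d"
    and inj: "inj_on a T" "inj_on b T" and disj: "a ` T \<inter> b ` T = {}"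
    using exists_disjoint_col_nbhd_choice[OF tf x x'] by blast
  have n_le: "real n \<le> 3 * card T"
    using card_colours_ge[OF tf] T(2) by linarith
  \<comment> \<open>V0 and D0 form one Bernoulli family on I, in which the blocks B d are disjoint.\<close>
  define I where "I = verts n <+> colours n col"
  define B where "B = (\<lambda>d. {Inr d, Inl (a d), Inl (b d)} :: (nat + 'c) set)"
  define F where "F = (\<lambda>h. ({v\<in>verts n. h (Inl v)}, {d\<in>colours n col. h (Inr d)}))"
  let ?Q = "Pi_pmf I False (\<lambda>_. bernoulli_pmf \<mu>)"
  let ?E = "{(V0, D0). real (card (linking_colours n col V0 D0 x x')) < \<mu>^3 * n / 6}"
  have pmf: "pair_pmf (random_subset \<mu> (verts n)) (random_subset \<mu> (colours n col)) = map_pmf F ?Q"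
    unfolding F_def I_def by (rule pair_random_subset_eq_Pi_pmf_Plus) simp_all
  have B: "B d \<subseteq> I \<and> card (B d) = 3" if "d \<in> T" for d
  proof -
    have "a d \<noteq> b d"
      using disj that by blast
    with that ab T(1) show ?thesis
      by (auto simp: B_def I_def dest: col_nbhd_subset_verts[THEN subsetD])
  qed
  have "F -` ?E \<subseteq> {h. real (card {d\<in>T. \<forall>i\<in>B d. h i}) \<le> card T * \<mu>^3 / 2}"
  proof
    fix h
    assume "h \<in> F -` ?E"
    moreover have "card {d\<in>T. \<forall>i\<in>B d. h i}
        \<le> card (linking_colours n col {v\<in>verts n. h (Inl v)} {d\<in>colours n col. h (Inr d)} x x')"
      using full_triples_subset_linking_colours[OF T(1) ab disj] by (intro card_mono) (auto simp: B_def linking_colours_def)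
    moreover have "\<mu>^3 * n \<le> 3 * (card T * \<mu>^3)"
      using mult_left_mono[OF n_le, of "\<mu>^3"] \<mu> by (simp add: mult_ac)
    ultimately show "h \<in> {h. real (card {d\<in>T. \<forall>i\<in>B d. h i}) \<le> card T * \<mu>^3 / 2}"
      by (simp add: F_def)
  qed
  then have "measure_pmf.prob ?Q (F -` ?E) \<le> measure_pmf.prob ?Q {h. real (card {d\<in>T. \<forall>i\<in>B d. h i}) \<le> card T * \<mu>^3 / 2}"
    by (rule measure_pmf.finite_measure_mono) simp
  also have "\<dots> \<le> exp (- (card T * (\<mu>^3)\<^sup>2 / 2))"
    using B T(1) \<mu> inj disj
    by (intro prob_Pi_pmf_bernoulli_few_full_blocks)
      (auto simp: I_def B_def disjoint_family_on_def finite_subset dest: inj_onD)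
  also have "\<dots> \<le> exp (- (\<mu>^6 * n / 6))"
    using mult_left_mono[OF n_le, of "\<mu>^6"] \<mu> by (simp add: power_mult[symmetric] mult_ac)
  finally show ?thesis
    unfolding pmf by simp
qed

lemma prob_some_pair_few_linking_colours:
  fixes col :: "nat set \<Rightarrow> 'c" and \<mu> :: real
  assumes tf: "two_factorization n col" and \<mu>: "0 \<le> \<mu>" "\<mu> \<le> 1"
  shows "measure_pmf.prob (pair_pmf (random_subset \<mu> (verts n)) (random_subset \<mu> (colours n col)))
     {(V0, D0). \<exists>x\<in>verts n. \<exists>x'\<in>verts n. real (card (linking_colours n col V0 D0 x x')) < \<mu>^3 * n / 6}
     \<le> (2 * real n + 1)\<^sup>2 * exp (- (\<mu>^6 * n / 6))"
proof -
  let ?P = "pair_pmf (random_subset \<mu> (verts n)) (random_subset \<mu> (colours n col))"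
  let ?E = "\<lambda>(x, x'). {(V0, D0). real (card (linking_colours n col V0 D0 x x')) < \<mu>^3 * n / 6}"
  have "measure_pmf.prob ?P
      {(V0, D0). \<exists>x\<in>verts n. \<exists>x'\<in>verts n. real (card (linking_colours n col V0 D0 x x')) < \<mu>^3 * n / 6}
      = measure_pmf.prob ?P (\<Union>p\<in>verts n \<times> verts n. ?E p)"
    by (intro arg_cong[where f = "measure_pmf.prob ?P"]) auto
  also have "\<dots> \<le> (\<Sum>p\<in>verts n \<times> verts n. measure_pmf.prob ?P (?E p))"
    by (rule measure_pmf.finite_measure_subadditive_finite) auto
  also have "\<dots> \<le> (\<Sum>p\<in>verts n \<times> verts n. exp (- (\<mu>^6 * n / 6)))"
    using prob_few_linking_colours[OF tf _ _ \<mu>] by (intro sum_mono) auto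
  also have "\<dots> = (2 * real n + 1)\<^sup>2 * exp (- (\<mu>^6 * n / 6))"
    by (simp add: verts_def card_cartesian_product power2_eq_square algebra_simps)
  finally show ?thesis .
qed

section \<open>Building the switcher\<close>

lemma replete_edge_avoiding:
  assumes tf: "two_factorization n col" and c: "c \<in> colours n col"
    and rep: "replete n col l X Z" and W: "finite W" and big: "l > 2 * card W"
  shows "\<exists>u v. v \<in> col_nbhd n col u c \<and> u \<in> X - W \<and> v \<in> Z - W"
proof -
  define E where "E = {e \<in> Kedges n. col e = c \<and> (\<exists>u\<in>X. \<exists>v\<in>Z. e = {u, v})}"
  define B where "B = (\<Union>w\<in>W. {e\<in>Kedges n. w \<in> e \<and> col e = c})"
  have "card B \<le> (\<Sum>w\<in>W. card {e\<in>Kedges n. w \<in> e \<and> col e = c})"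
    unfolding B_def using W by (rule card_UN_le)
  also have "\<dots> \<le> (\<Sum>w\<in>W. 2)"
    by (intro sum_mono card_edges_at_vertex_le[OF tf c])
  also have "\<dots> = 2 * card W"
    by simp
  finally have "real (card B) \<le> real (2 * card W)"
    by (rule of_nat_mono)
  moreover have "l \<le> real (card E)"
    using rep c unfolding replete_def E_def by blast
  ultimately have "card B < card E"
    using big by linarith
  moreover have "finite B"
    unfolding B_def using W by simp
  ultimately have "\<not> E \<subseteq> B"
    using card_mono[of B E] by linarith
  then obtain e where "e \<in> E" "e \<notin> B"
    by blast
  then show ?thesis
    unfolding E_def B_def col_nbhd_def by blast
qed

lemma linking_colour_avoiding:
  assumes many: "real (card (linking_colours n col V0 D0 x x')) \<ge> t"
    and W: "finite W" and F: "finite F" and big: "t > card F + 2 * card W"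
  shows "\<exists>d a b. d \<in> D0 - F \<and> a \<in> V0 - W \<and> b \<in> V0 - W \<and> a \<noteq> b \<and>
    a \<in> col_nbhd n col x d \<and> b \<in> col_nbhd n col x' d"
proof -
  define Bad where "Bad = F \<union> (\<lambda>w. col {x, w}) ` W \<union> (\<lambda>w. col {x', w}) ` W"
  have "card Bad \<le> card F + 2 * card W"
    unfolding Bad_def using W by (rule card_Un_images_le)
  moreover have "finite Bad"
    unfolding Bad_def using F W by simp
  ultimately have "\<not> linking_colours n col V0 D0 x x' \<subseteq> Bad"
    using many big card_mono[of Bad "linking_colours n col V0 D0 x x'"] by linarith
  then obtain d where d: "d \<in> linking_colours n col V0 D0 x x'" "d \<notin> Bad"
    by blast
  then obtain a b where ab: "d \<in> D0" "a \<in> V0" "b \<in> V0" "a \<noteq> b"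
      "a \<in> col_nbhd n col x d" "b \<in> col_nbhd n col x' d"
    unfolding linking_colours_def by blast
  moreover have "a \<notin> W" "b \<notin> W" "d \<notin> F"
    using ab d(2) unfolding Bad_def col_nbhd_def by force+
  ultimately show ?thesis
    by blast
qed

lemma exists_rainbow_edges_replete:
  fixes cs :: "nat \<Rightarrow> 'c"
  assumes tf: "two_factorization n col" and cs: "\<forall>i<k. cs i \<in> colours n col"
    and rep: "replete n col l X Z" and Vbar: "finite Vbar" and big: "l > 2 * (card Vbar + k)"
  shows "\<exists>x y. (\<forall>i<k. y i \<in> col_nbhd n col (x i) (cs i) \<and> x i \<in> X - Vbar \<and> y i \<in> Z - Vbar)
    \<and> inj_on x {..<k}"
proof -
  define P where "P = (\<lambda>i (u, v). v \<in> col_nbhd n col u (cs i) \<and> u \<in> X - Vbar \<and> v \<in> Z - Vbar)"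
  define Q :: "nat \<times> nat \<Rightarrow> nat \<times> nat \<Rightarrow> bool" where "Q = (\<lambda>e' e. fst e' \<noteq> fst e)"
  have "\<exists>e. P i e \<and> (\<forall>j<i. Q (es j) e)" if i: "i < k" for i es
  proof -
    define W where "W = Vbar \<union> (\<lambda>j. fst (es j)) ` {..<i}"
    have "card W \<le> card Vbar + i"
      unfolding W_def using card_image_le[of "{..<i}" "\<lambda>j. fst (es j)"]
      by (intro order_trans[OF card_Un_le]) simp
    then have "real (2 * card W) \<le> real (2 * (card Vbar + k))"
      using i by simp
    then have "l > 2 * card W"
      using big by linarith
    moreover have "finite W"
      unfolding W_def using Vbar by simp
    ultimately obtain u v where "v \<in> col_nbhd n col u (cs i)" "u \<in> X - W" "v \<in> Z - W"
      using replete_edge_avoiding[OF tf _ rep, of "cs i" W] cs i by blast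
    then show ?thesis
      unfolding P_def Q_def W_def by (intro exI[of _ "(u, v)"]) auto
  qed
  then obtain es where P: "\<forall>i<k. P i (es i)" and Q: "\<forall>i<k. \<forall>j<i. Q (es j) (es i)"
    using greedy_sequence[of k P Q] by blast
  have "inj_on (\<lambda>i. fst (es i)) {..<k}"
    by (rule inj_on_lessThanI) (use Q in \<open>simp add: Q_def\<close>)
  with P show ?thesis
    unfolding P_def case_prod_unfold
    by (intro exI[of _ "\<lambda>i. fst (es i)"] exI[of _ "\<lambda>i. snd (es i)"]) simp
qed

lemma exists_linking_chain:
  fixes col :: "nat set \<Rightarrow> 'c"
  assumes many: "\<forall>u\<in>verts n. \<forall>u'\<in>verts n. real (card (linking_colours n col V0 D0 u u')) \<ge> t"
    and x: "\<forall>i\<le>K. x i \<in> verts n" and W0: "finite W0" and F0: "finite F0"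
    and big: "t > card F0 + K + 2 * (card W0 + 2 * K)"
  shows "\<exists>d a b. (\<forall>i<K. d i \<in> D0 - F0 \<and> a i \<in> V0 - W0 \<and> b i \<in> V0 - W0 \<and>
      a i \<in> col_nbhd n col (x i) (d i) \<and> b i \<in> col_nbhd n col (x (Suc i)) (d i))
    \<and> inj_on d {..<K} \<and> inj_on a {..<K} \<and> inj_on b {..<K} \<and> a ` {..<K} \<inter> b ` {..<K} = {}"
proof -
  define P :: "nat \<Rightarrow> 'c \<times> nat \<times> nat \<Rightarrow> bool"
    where "P = (\<lambda>i (d, a, b). d \<in> D0 - F0 \<and> a \<in> V0 - W0 \<and> b \<in> V0 - W0 \<and> a \<noteq> b \<and>
      a \<in> col_nbhd n col (x i) d \<and> b \<in> col_nbhd n col (x (Suc i)) d)"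
  define Q :: "'c \<times> nat \<times> nat \<Rightarrow> 'c \<times> nat \<times> nat \<Rightarrow> bool"
    where "Q = (\<lambda>(d', a', b') (d, a, b). d' \<noteq> d \<and> a' \<notin> {a, b} \<and> b' \<notin> {a, b})"
  have "\<exists>z. P i z \<and> (\<forall>j<i. Q (zs j) z)" if i: "i < K" for i and zs :: "nat \<Rightarrow> 'c \<times> nat \<times> nat"
  proof -
    define W where "W = W0 \<union> (\<lambda>j. fst (snd (zs j))) ` {..<i} \<union> (\<lambda>j. snd (snd (zs j))) ` {..<i}"
    define F where "F = F0 \<union> (\<lambda>j. fst (zs j)) ` {..<i}"
    have "card W \<le> card W0 + 2 * i"
      unfolding W_def using card_Un_images_le[of "{..<i}" W0] by simp
    moreover have "card F \<le> card F0 + i"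
      unfolding F_def using card_image_le[of "{..<i}" "\<lambda>j. fst (zs j)"]
      by (intro order_trans[OF card_Un_le]) simp
    ultimately have "real (card F + 2 * card W) \<le> real (card F0 + K + 2 * (card W0 + 2 * K))"
      using i by simp
    then have "t > card F + 2 * card W"
      using big by linarith
    moreover have "real (card (linking_colours n col V0 D0 (x i) (x (Suc i)))) \<ge> t"
      using many x i by simp
    moreover have "finite W" "finite F"
      unfolding W_def F_def using W0 F0 by simp_all
    ultimately obtain d a b where "d \<in> D0 - F" "a \<in> V0 - W" "b \<in> V0 - W" "a \<noteq> b"
        "a \<in> col_nbhd n col (x i) d" "b \<in> col_nbhd n col (x (Suc i)) d"
      using linking_colour_avoiding by blast
    then show ?thesis
      by (intro exI[of _ "(d, a, b)"]) (auto simp: P_def Q_def W_def F_def case_prod_unfold)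
  qed
  then obtain zs where P: "\<forall>i<K. P i (zs i)" and Q: "\<forall>i<K. \<forall>j<i. Q (zs j) (zs i)"
    using greedy_sequence[of K P Q] by blast
  define d a b where "d i = fst (zs i)" and "a i = fst (snd (zs i))" and "b i = snd (snd (zs i))" for i
  have P': "\<forall>i<K. d i \<in> D0 - F0 \<and> a i \<in> V0 - W0 \<and> b i \<in> V0 - W0 \<and> a i \<noteq> b i \<and>
      a i \<in> col_nbhd n col (x i) (d i) \<and> b i \<in> col_nbhd n col (x (Suc i)) (d i)"
    using P by (simp add: P_def d_def a_def b_def case_prod_unfold)
  have Q': "\<forall>i<K. \<forall>j<i. d j \<noteq> d i \<and> a j \<notin> {a i, b i} \<and> b j \<notin> {a i, b i}"
    using Q by (simp add: Q_def d_def a_def b_def case_prod_unfold)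
  have "\<forall>i<K. a i \<noteq> b i"
    using P' by blast
  note inj_on_disjoint_images_lessThan[OF this Q']
  with P' show ?thesis
    by (intro exI[of _ d] exI[of _ a] exI[of _ b]) simp
qed

lemma perfect_rainbow_matchingI:
  assumes inj: "inj_on u I" "inj_on v I" "inj_on c I" and disj: "u ` I \<inter> v ` I = {}"
    and edges: "\<And>i. i \<in> I \<Longrightarrow> v i \<in> col_nbhd n col (u i) (c i)"
    and "c ` I \<subseteq> D" "v ` I \<subseteq> V'"
  shows "perfect_rainbow_matching n col D (u ` I) V' ((\<lambda>i. {u i, v i}) ` I)"
  unfolding perfect_rainbow_matching_def
proof (intro conjI ballI impI)
  show "(\<lambda>i. {u i, v i}) ` I \<subseteq> Kedges n"
    using edges by (auto simp: col_nbhd_def)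
  show "col ` (\<lambda>i. {u i, v i}) ` I \<subseteq> D"
    using edges \<open>c ` I \<subseteq> D\<close> by (auto simp: col_nbhd_def)
  show "inj_on col ((\<lambda>i. {u i, v i}) ` I)"
    using edges inj(3) by (auto simp: inj_on_def col_nbhd_def)
  fix e e'
  assume "e \<in> (\<lambda>i. {u i, v i}) ` I" "e' \<in> (\<lambda>i. {u i, v i}) ` I" "e \<noteq> e'"
  then obtain i j where "i \<in> I" "j \<in> I" "i \<noteq> j" "e = {u i, v i}" "e' = {u j, v j}"
    by auto
  then show "e \<inter> e' = {}"
    using inj_onD[OF inj(1)] inj_onD[OF inj(2)] disj by auto
next
  fix e
  assume "e \<in> (\<lambda>i. {u i, v i}) ` I"
  then show "\<exists>x\<in>u ` I. \<exists>w\<in>V' - u ` I. e = {x, w}"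
    using disj \<open>v ` I \<subseteq> V'\<close> by blast
qed auto

(* With f = a, z = y_j and g = b these are the partners of x_0, ..., x_K in the matching
   absorbing c_j; with f = g = d and z = c_j they are the colours of its edges. *)
definition switch_at :: "nat \<Rightarrow> (nat \<Rightarrow> 'a) \<Rightarrow> 'a \<Rightarrow> (nat \<Rightarrow> 'a) \<Rightarrow> nat \<Rightarrow> 'a" where
  "switch_at j f z g i = (if i < j then f i else if i = j then z else g (i - 1))"

lemma switch_at_image_subset:
  "j \<le> K \<Longrightarrow> switch_at j f z g ` {..K} \<subseteq> insert z (f ` {..<K} \<union> g ` {..<K})"
  by (auto simp: switch_at_def)

lemma inj_on_switch_at:
  assumes "j \<le> K" "inj_on f {..<K}" "inj_on g {..<K}"
    and "\<And>i i'. i < j \<Longrightarrow> j \<le> i' \<Longrightarrow> i' < K \<Longrightarrow> f i \<noteq> g i'"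
    and "\<And>i. i < j \<Longrightarrow> f i \<noteq> z" "\<And>i. j \<le> i \<Longrightarrow> i < K \<Longrightarrow> g i \<noteq> z"
  shows "inj_on (switch_at j f z g) {..K}"
proof (rule inj_onI)
  fix i i'
  assume "i \<in> {..K}" "i' \<in> {..K}" "switch_at j f z g i = switch_at j f z g i'"
  with \<open>j \<le> K\<close> show "i = i'"
    by (auto simp: switch_at_def inj_on_eq_iff[OF assms(2)] inj_on_eq_iff[OF assms(3)]
        assms(4-6) assms(4-6)[THEN not_sym] split: if_splits)
qed

lemma exists_switched_rainbow_matching:
  assumes j: "j \<le> K" and x: "inj_on x {..K}"
    and abd: "inj_on a {..<K}" "inj_on b {..<K}" "inj_on d {..<K}" "a ` {..<K} \<inter> b ` {..<K} = {}"
    and chain: "\<forall>i<K. a i \<in> col_nbhd n col (x i) (d i) \<and> b i \<in> col_nbhd n col (x (Suc i)) (d i)"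
    and y: "y \<in> col_nbhd n col (x j) c" "y \<notin> x ` {..K}" and c: "c \<notin> d ` {..<K}"
    and avoid: "(a ` {..<K} \<union> b ` {..<K}) \<inter> insert y (x ` {..K}) = {}"
    and V': "insert y (a ` {..<K} \<union> b ` {..<K}) \<subseteq> V'"
  shows "\<exists>M. perfect_rainbow_matching n col (insert c (d ` {..<K})) (x ` {..K}) V' M"
proof -
  let ?v = "switch_at j a y b" and ?c = "switch_at j d c d"
  have "a i \<noteq> b i'" if "i < K" "i' < K" for i i'
    using abd(4) that by blast
  moreover have "a i \<noteq> y" "b i \<noteq> y" if "i < K" for i
    using avoid that by blast+
  ultimately have "inj_on ?v {..K}"
    using j by (intro inj_on_switch_at j abd(1,2)) simp_all
  moreover have "inj_on ?c {..K}"
  proof (intro inj_on_switch_at j abd(3))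
    show "d i \<noteq> d i'" if "i < j" "j \<le> i'" "i' < K" for i i'
      using inj_onD[OF abd(3), of i i'] that by auto
    show "d i \<noteq> c" if "i < j" for i
      using c that j by auto
    show "d i \<noteq> c" if "j \<le> i" "i < K" for i
      using c that by auto
  qed
  moreover have "?v ` {..K} \<subseteq> insert y (a ` {..<K} \<union> b ` {..<K})"
    by (rule switch_at_image_subset[OF j])
  then have "x ` {..K} \<inter> ?v ` {..K} = {}" "?v ` {..K} \<subseteq> V'"
    using y(2) avoid V' by blast+
  moreover have "?c ` {..K} \<subseteq> insert c (d ` {..<K})"
    using switch_at_image_subset[OF j, of d c d] by simp
  moreover have "?v i \<in> col_nbhd n col (x i) (?c i)" if "i \<in> {..K}" for i
    using chain[rule_format, of i] chain[rule_format, of "i - 1"] y(1) j that by (auto simp: switch_at_def)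
  ultimately have "perfect_rainbow_matching n col (insert c (d ` {..<K})) (x ` {..K}) V'
      ((\<lambda>i. {x i, ?v i}) ` {..K})"
    by (intro perfect_rainbow_matchingI[OF x]) auto
  then show ?thesis
    by blast
qed

lemma rainbow_switcher_from_chain:
  assumes cs: "bij_betw cs {..K} C"
    and xy: "\<forall>i\<le>K. y i \<in> col_nbhd n col (x i) (cs i) \<and> x i \<in> X - Vbar \<and> y i \<in> Z - Vbar"
    and inj_x: "inj_on x {..K}" and XZ: "X \<inter> Z = {}"
    and chain: "\<forall>i<K. d i \<in> D0 - F0 \<and> a i \<in> V0 - W0 \<and> b i \<in> V0 - W0 \<and>
      a i \<in> col_nbhd n col (x i) (d i) \<and> b i \<in> col_nbhd n col (x (Suc i)) (d i)"
    and inj: "inj_on d {..<K}" "inj_on a {..<K}" "inj_on b {..<K}" and disj: "a ` {..<K} \<inter> b ` {..<K} = {}"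
    and W0: "Vbar \<union> x ` {..K} \<union> y ` {..K} \<subseteq> W0" and F0: "Cbar \<union> C \<subseteq> F0"
  shows "\<exists>X' C' V'. X' \<subseteq> X - Vbar \<and> C' \<subseteq> D0 - Cbar \<and> V' \<subseteq> (V0 \<union> Z) - Vbar \<and>
     card X' = card C \<and> card C' = card C - 1 \<and> card V' \<le> 3 * card C \<and>
     (\<forall>c\<in>C. \<exists>M. perfect_rainbow_matching n col (C' \<union> {c}) X' V' M)"
proof -
  have K: "card C = Suc K"
    using bij_betw_same_card[OF cs] by simp
  have "d i \<notin> C \<and> a i \<notin> insert (y j) (x ` {..K}) \<and> b i \<notin> insert (y j) (x ` {..K})"
    if "i \<in> {..<K}" "j \<le> K" for i j
    using chain W0 F0 that by auto
  then have avoid: "d ` {..<K} \<inter> C = {}"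
    "\<And>j. j \<le> K \<Longrightarrow> (a ` {..<K} \<union> b ` {..<K}) \<inter> insert (y j) (x ` {..K}) = {}"
    by blast+
  have "x ` {..K} \<subseteq> X" "y ` {..K} \<subseteq> Z"
    using xy by auto
  then have y_notin: "y j \<notin> x ` {..K}" if "j \<le> K" for j
    using XZ that by blast
  define V' where "V' = y ` {..K} \<union> a ` {..<K} \<union> b ` {..<K}"
  have "\<exists>M. perfect_rainbow_matching n col (d ` {..<K} \<union> {c}) (x ` {..K}) V' M" if c: "c \<in> C" for c
  proof -
    obtain j where j: "j \<le> K" "c = cs j"
      using cs c by (auto simp: bij_betw_def)
    then have "insert (y j) (a ` {..<K} \<union> b ` {..<K}) \<subseteq> V'"
      by (auto simp: V'_def)
    moreover have "y j \<in> col_nbhd n col (x j) c"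
      using xy j by auto
    moreover have "c \<notin> d ` {..<K}"
      using avoid(1) c by blast
    moreover have "\<forall>i<K. a i \<in> col_nbhd n col (x i) (d i) \<and> b i \<in> col_nbhd n col (x (Suc i)) (d i)"
      using chain by blast
    ultimately show ?thesis
      using exists_switched_rainbow_matching[OF j(1) inj_x inj(2,3,1) disj _ _ y_notin[OF j(1)] _ avoid(2)[OF j(1)]]
      by simp
  qed
  moreover have "card V' \<le> card (y ` {..K}) + 2 * K"
    unfolding V'_def using card_Un_images_le[of "{..<K}" "y ` {..K}" a b] by simp
  moreover have "card (y ` {..K}) \<le> Suc K"
    using card_image_le[of "{..K}" y] by simp
  moreover have "x ` {..K} \<subseteq> X - Vbar" "d ` {..<K} \<subseteq> D0 - Cbar" "V' \<subseteq> (V0 \<union> Z) - Vbar"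
    using xy chain W0 F0 by (auto simp: V'_def)
  moreover have "card (x ` {..K}) = card C" "card (d ` {..<K}) = card C - 1"
    using inj_x inj(1) K by (simp_all add: card_image)
  ultimately show ?thesis
    using K by (intro exI[of _ "x ` {..K}"] exI[of _ "d ` {..<K}"] exI[of _ V'] conjI ballI) simp_all
qed

lemma exists_rainbow_switcher:
  fixes col :: "nat set \<Rightarrow> 'c"
  assumes tf: "two_factorization n col"
    and many: "\<forall>u\<in>verts n. \<forall>u'\<in>verts n. real (card (linking_colours n col V0 D0 u u')) \<ge> t"
    and C: "C \<subseteq> colours n col" "C \<noteq> {}" and X: "X \<subseteq> verts n" and XZ: "X \<inter> Z = {}"
    and fin: "finite Cbar" "finite Vbar" and rep: "replete n col l X Z"
    and l: "l > 2 * (card Vbar + card C)" and t: "t > card Cbar + 2 * card Vbar + 10 * card C"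
  shows "\<exists>X' C' V'. X' \<subseteq> X - Vbar \<and> C' \<subseteq> D0 - Cbar \<and> V' \<subseteq> (V0 \<union> Z) - Vbar \<and>
     card X' = card C \<and> card C' = card C - 1 \<and> card V' \<le> 3 * card C \<and>
     (\<forall>c\<in>C. \<exists>M. perfect_rainbow_matching n col (C' \<union> {c}) X' V' M)"
proof -
  have "finite C"
    using C(1) by (rule finite_subset) simp
  with C(2) have "card C \<noteq> 0"
    by simp
  then obtain K where K: "card C = Suc K"
    using not0_implies_Suc by blast
  obtain cs where "bij_betw cs {0..<card C} C"
    using ex_bij_betw_nat_finite[OF \<open>finite C\<close>] by blast
  then have cs: "bij_betw cs {..K} C"
    unfolding K atLeast0LessThan lessThan_Suc_atMost .
  then have "\<forall>i<Suc K. cs i \<in> colours n col"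
    using C(1) by (auto simp: bij_betw_def)
  moreover have "l > 2 * (card Vbar + Suc K)"
    using l K by simp
  ultimately obtain x y where "\<forall>i<Suc K. y i \<in> col_nbhd n col (x i) (cs i) \<and> x i \<in> X - Vbar \<and> y i \<in> Z - Vbar"
    and "inj_on x {..<Suc K}"
    using exists_rainbow_edges_replete[OF tf _ rep fin(2)] by blast
  then have xy: "\<forall>i\<le>K. y i \<in> col_nbhd n col (x i) (cs i) \<and> x i \<in> X - Vbar \<and> y i \<in> Z - Vbar"
    and inj_x: "inj_on x {..K}"
    unfolding lessThan_Suc_atMost less_Suc_eq_le by blast+
  define W0 where "W0 = Vbar \<union> x ` {..K} \<union> y ` {..K}"
  define F0 where "F0 = Cbar \<union> C"
  have "card W0 \<le> card Vbar + 2 * Suc K"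
    unfolding W0_def using card_Un_images_le[of "{..K}" Vbar x y] by simp
  moreover have "card F0 \<le> card Cbar + card C"
    unfolding F0_def by (rule card_Un_le)
  ultimately have t_big: "t > card F0 + K + 2 * (card W0 + 2 * K)"
    using t K by simp
  have x_verts: "\<forall>i\<le>K. x i \<in> verts n"
    using xy X by blast
  have "finite W0" "finite F0"
    unfolding W0_def F0_def using fin \<open>finite C\<close> by simp_all
  from exists_linking_chain[OF many x_verts this t_big] obtain d a b
    where "\<forall>i<K. d i \<in> D0 - F0 \<and> a i \<in> V0 - W0 \<and> b i \<in> V0 - W0 \<and>
      a i \<in> col_nbhd n col (x i) (d i) \<and> b i \<in> col_nbhd n col (x (Suc i)) (d i)"
      "inj_on d {..<K}" "inj_on a {..<K}" "inj_on b {..<K}" "a ` {..<K} \<inter> b ` {..<K} = {}"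
    by blast
  then show ?thesis
    by (rule rainbow_switcher_from_chain[OF cs xy inj_x XZ]) (simp_all add: W0_def F0_def)
qed

lemma lemma4p1_property_if_many_linking_colours:
  fixes col :: "nat set \<Rightarrow> 'c" and \<beta> \<xi> t :: real
  assumes tf: "two_factorization n col"
    and many: "\<forall>u\<in>verts n. \<forall>u'\<in>verts n. real (card (linking_colours n col V0 D0 u u')) \<ge> t"
    and \<xi>: "\<xi> * n > 2 * (\<beta> * n) + 400" and t: "t > 3 * (\<beta> * n) + 1000"
  shows "lemma4p1_property n col \<beta> \<xi> V0 D0"
  unfolding lemma4p1_property_def
proof (intro allI impI)
  fix C Cbar X Vbar Z
  assume C: "C \<subseteq> colours n col" and Cbar: "Cbar \<subseteq> colours n col" and X: "X \<subseteq> verts n"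
    and Vbar: "Vbar \<subseteq> verts n" and "Z \<subseteq> verts n" and card_Cbar: "real (card Cbar) \<le> \<beta> * n"
    and card_Vbar: "real (card Vbar) \<le> \<beta> * n" and card_C: "card C \<le> 100" and XZ: "X \<inter> Z = {}"
    and rep: "replete n col (\<xi> * n) X Z"
  show "\<exists>X' C' V'. X' \<subseteq> X - Vbar \<and> C' \<subseteq> D0 - Cbar \<and> V' \<subseteq> (V0 \<union> Z) - Vbar \<and>
     card X' = card C \<and> card C' = card C - 1 \<and> card V' \<le> 3 * card C \<and>
     (\<forall>c\<in>C. \<exists>M. perfect_rainbow_matching n col (C' \<union> {c}) X' V' M)"
  proof (cases "C = {}")
    case False
    have "finite Cbar" "finite Vbar"
      using Cbar Vbar by (auto intro: finite_subset)
    moreover have "\<xi> * n > 2 * (card Vbar + card C)" "t > card Cbar + 2 * card Vbar + 10 * card C"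
      using \<xi> t card_Vbar card_Cbar card_C by simp_all
    ultimately show ?thesis
      by (rule exists_rainbow_switcher[OF tf many C False X XZ _ _ rep])
  qed (intro exI[of _ "{}"], simp)
qed

lemma prob_lemma4p1_property_ge:
  fixes col :: "nat set \<Rightarrow> 'c" and \<mu> \<beta> \<xi> :: real
  assumes tf: "two_factorization n col" and \<mu>: "0 \<le> \<mu>" "\<mu> \<le> 1"
    and \<xi>: "\<xi> * n > 2 * (\<beta> * n) + 400" and \<mu>3: "\<mu>^3 * n / 6 > 3 * (\<beta> * n) + 1000"
  shows "measure_pmf.prob (pair_pmf (random_subset \<mu> (verts n)) (random_subset \<mu> (colours n col)))
     {(V0, D0). lemma4p1_property n col \<beta> \<xi> V0 D0} \<ge> 1 - (2 * real n + 1)\<^sup>2 * exp (- (\<mu>^6 * n / 6))"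
proof -
  let ?P = "pair_pmf (random_subset \<mu> (verts n)) (random_subset \<mu> (colours n col))"
  let ?B = "{(V0, D0). \<exists>x\<in>verts n. \<exists>x'\<in>verts n. real (card (linking_colours n col V0 D0 x x')) < \<mu>^3 * n / 6}"
  have "UNIV - ?B \<subseteq> {(V0, D0). lemma4p1_property n col \<beta> \<xi> V0 D0}"
    using lemma4p1_property_if_many_linking_colours[OF tf _ \<xi> \<mu>3] by (force simp: not_less)
  then have "measure_pmf.prob ?P (UNIV - ?B) \<le> measure_pmf.prob ?P {(V0, D0). lemma4p1_property n col \<beta> \<xi> V0 D0}"
    by (rule measure_pmf.finite_measure_mono) simp
  moreover have "measure_pmf.prob ?P (UNIV - ?B) = 1 - measure_pmf.prob ?P ?B"
    using measure_pmf.prob_compl[of ?B ?P] by simp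
  ultimately show ?thesis
    using prob_some_pair_few_linking_colours[OF tf \<mu>] by linarith
qed

lemma eventually_linear_gt_at_top:
  fixes a b :: real
  assumes "a > 0"
  shows "eventually (\<lambda>n::nat. a * n > b) at_top"
  using assms by real_asymp

lemma eventually_square_mult_exp_lt_at_top:
  fixes c \<epsilon> :: real
  assumes "c > 0" "\<epsilon> > 0"
  shows "eventually (\<lambda>n::nat. (2 * real n + 1)\<^sup>2 * exp (- (c * n)) < \<epsilon>) at_top"
proof -
  have "((\<lambda>n::nat. (2 * real n + 1)\<^sup>2 * exp (- (c * n))) \<longlongrightarrow> 0) at_top"
    using assms(1) by real_asymp
  then show ?thesis
    using assms(2) by (rule order_tendstoD)
qed

lemma eventually_prob_lemma4p1_property_ge:
  fixes \<xi> \<mu> \<beta> \<epsilon> :: real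
  assumes \<mu>: "0 < \<mu>" "\<mu> \<le> 1" and \<beta>: "\<beta> \<le> \<xi> / 36" "\<beta> \<le> \<mu>^3 / 36" and "\<xi> > 0" "\<epsilon> > 0"
  shows "eventually (\<lambda>n. \<forall>col :: nat set \<Rightarrow> nat. two_factorization n col \<longrightarrow>
      measure_pmf.prob (pair_pmf (random_subset \<mu> (verts n)) (random_subset \<mu> (colours n col)))
        {(V0, D0). lemma4p1_property n col \<beta> \<xi> V0 D0} \<ge> 1 - \<epsilon>) at_top"
proof -
  have "eventually (\<lambda>n::nat. (\<xi> - 2 * \<beta>) * n > 400) at_top"
    using assms by (intro eventually_linear_gt_at_top) simp
  moreover have "eventually (\<lambda>n::nat. (\<mu>^3 / 6 - 3 * \<beta>) * n > 1000) at_top"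
    using \<beta> zero_less_power[OF \<mu>(1), of 3] by (intro eventually_linear_gt_at_top) linarith
  moreover have "eventually (\<lambda>n::nat. (2 * real n + 1)\<^sup>2 * exp (- (\<mu>^6 / 6 * n)) < \<epsilon>) at_top"
    using assms by (intro eventually_square_mult_exp_lt_at_top) simp_all
  ultimately show ?thesis
  proof eventually_elim
    case (elim n)
    show ?case
    proof (intro allI impI)
      fix col :: "nat set \<Rightarrow> nat"
      assume "two_factorization n col"
      from prob_lemma4p1_property_ge[OF this, of \<mu> \<beta> \<xi>] elim \<mu>
      show "measure_pmf.prob (pair_pmf (random_subset \<mu> (verts n)) (random_subset \<mu> (colours n col)))
        {(V0, D0). lemma4p1_property n col \<beta> \<xi> V0 D0} \<ge> 1 - \<epsilon>"
        by (simp add: algebra_simps)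
    qed
  qed
qed

lemma min_power_36_bounds:
  fixes \<xi> \<mu> \<beta> :: real
  assumes "0 < \<xi>" "0 < \<mu>" "\<mu> \<le> 1" "\<beta> \<le> (min \<xi> \<mu>) ^ 36 / 36"
  shows "\<beta> \<le> \<xi> / 36" "\<beta> \<le> \<mu>^3 / 36"
proof -
  define m where "m = min \<xi> \<mu>"
  have m: "0 < m" "m \<le> 1" "m \<le> \<xi>" "m \<le> \<mu>"
    using assms by (simp_all add: m_def)
  have "m ^ 36 \<le> m" "m ^ 36 \<le> m ^ 3"
    using m power_decreasing[of 1 36 m] power_decreasing[of 3 36 m] by simp_all
  moreover have "m ^ 3 \<le> \<mu> ^ 3"
    using m by (intro power_mono) simp_all
  ultimately show "\<beta> \<le> \<xi> / 36" "\<beta> \<le> \<mu>^3 / 36"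
    using m assms(4) unfolding m_def by linarith+
qed

theorem lemma4p1:
  "\<exists>K::real. K > 0 \<and>
    (\<forall>\<xi> \<mu> \<beta>::real. 0 < \<xi> \<longrightarrow> 0 < \<mu> \<longrightarrow> \<mu> \<le> 1 \<longrightarrow>
       0 < \<beta> \<longrightarrow> \<beta> \<le> (min \<xi> \<mu>) ^ nat \<lceil>K\<rceil> / K \<longrightarrow>
       (\<forall>\<epsilon>>0. \<exists>n0::nat. \<forall>n\<ge>n0. \<forall>col :: nat set \<Rightarrow> nat.
          two_factorization n col \<longrightarrow>
          measure_pmf.prob
            (pair_pmf (random_subset \<mu> (verts n)) (random_subset \<mu> (colours n col)))
            {(V0, D0). lemma4p1_property n col \<beta> \<xi> V0 D0} \<ge> 1 - \<epsilon>))"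
proof (intro exI[of _ "36::real"] conjI allI impI)
  fix \<xi> \<mu> \<beta> \<epsilon> :: real
  assume "0 < \<xi>" "0 < \<mu>" "\<mu> \<le> 1" "\<beta> \<le> (min \<xi> \<mu>) ^ nat \<lceil>36::real\<rceil> / 36" "\<epsilon> > 0"
  then have "\<beta> \<le> \<xi> / 36" "\<beta> \<le> \<mu>^3 / 36"
    using min_power_36_bounds[of \<xi> \<mu> \<beta>] by simp_all
  with \<open>0 < \<xi>\<close> \<open>0 < \<mu>\<close> \<open>\<mu> \<le> 1\<close> \<open>\<epsilon> > 0\<close>
  show "\<exists>n0. \<forall>n\<ge>n0. \<forall>col :: nat set \<Rightarrow> nat. two_factorization n col \<longrightarrow>
      measure_pmf.prob (pair_pmf (random_subset \<mu> (verts n)) (random_subset \<mu> (colours n col)))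
        {(V0, D0). lemma4p1_property n col \<beta> \<xi> V0 D0} \<ge> 1 - \<epsilon>"
    using eventually_prob_lemma4p1_property_ge by (simp add: eventually_at_top_linorder)
qed simp

end
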